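(* In the setting below, $$\mathrm{Syl}_B(J)\cdot\begin{pmatrix}\mathfrak{M}_B(\mathbf{y})\\ \mathfrak{R}_B(\mathbf{y})\end{pmatrix}=[\mathrm{Tr}(b_ib_j)]_{i,j=1}^N.$$
   Context: Setting: $\mathbb{K}$ algebraically closed, $\mathbf{x}=(x_1,\ldots,x_m)$, $f_1,\ldots,f_s\in\mathbb{K}[\mathbf{x}]$ of degrees $d_i$, $\mathcal{I}=\langle f_1,\ldots,f_s\rangle$, $\mathcal{A}=\mathbb{K}[\mathbf{x}]/\mathcal{I}$ finite dimensional of dimension $N$. $\mathbb{K}[\mathbf{x}]_k$ = polynomials of total degree $\le k$; $\langle f_1,\ldots,f_s\rangle_d:=\{\sum_i q_if_i:\deg q_i\le d-d_i\}$; $\mathrm{Mon}_\le(\Delta)$ = monomials of degree $\le\Delta$. $B=[b_1,\ldots,b_N]$ are monomials $b_i=\mathbf{x}^{\alpha_i}$ of degree $\le D$ whose classes form a basis of $\mathcal{A}$, and $\Delta\ge2D$ is such that their classes also form a basis of $\mathbb{K}[\mathbf{x}]_\Delta/(\langle f_1,\ldots,f_s\rangle_{\Delta+1}\cap\mathbb{K}[\mathbf{x}]_\Delta)$. $\mathrm{Mac}_\Delta(\mathbf{f})$ is a matrix whose rows are the coefficient vectors (w.r.t. $\mathrm{Mon}_\le(\Delta)$) of a basis of $\langle f_1,\ldots,f_s\rangle_{\Delta+1}\cap\mathbb{K}[\mathbf{x}]_\Delta$, with columns indexed by $\mathrm{Mon}_\le(\Delta)$, the monomials of $B$ first. Fix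 $\mathbf{y}=(y_\alpha)_{|\alpha|\le\Delta}$ with $\mathrm{Mac}_\Delta(\mathbf{f})\mathbf{y}=0$ such that the moment matrix $\mathfrak{M}_B(\mathbf{y})=[y_{\alpha_i+\alpha_j}]_{i,j=1}^N$ is invertible. $\mathfrak{R}_B(\mathbf{y})$ is the unique matrix with rows indexed by $\mathrm{Mon}_\le(\Delta)\setminus B$ and columns by $B$ such that $\mathrm{Mac}_\Delta(\mathbf{f})\cdot\binom{\mathfrak{M}_B(\mathbf{y})}{\mathfrak{R}_B(\mathbf{y})}=0$ (rows of the stacked matrix ordered as the columns of $\mathrm{Mac}_\Delta(\mathbf{f})$). Write $\mathfrak{M}_B(\mathbf{y})^{-1}=[c_{ij}]$, $b_i^*:=\sum_{j}c_{ji}b_j$, and let $J$ be the unique element of $\mathrm{span}(b_1,\ldots,b_N)$ congruent to $\sum_i b_ib_i^*$ modulo $\mathcal{I}$ (so $\deg J\le D$). $\mathrm{Syl}_B(J)$ is the $N\times|\mathrm{Mon}_\le(\Delta)|$ matrix whose $i$-th row is the coefficient vector of the polynomial $b_iJ$ (of degree $\le 2D\le\Delta$) with respect to $\mathrm{Mon}_\le(\Delta)$, columns ordered as in $\mathrm{Mac}_\Delta(\mathbf{f})$. $\mathrm{Tr}(h)$ is the trace of the multiplication map $g\mapsto hg$ on $\mathcal{A}$. *)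

theory Defs
  imports "HOL-Computational_Algebra.Polynomial" "HOL-Library.Poly_Mapping"
begin

text \<open>Multivariate polynomials over 'k in the variables indexed by the finite type 'v:
  monomials are finitely supported exponent vectors, polynomials are finitely supported
  coefficient functions on monomials (multiplication = convolution, from Poly_Mapping).\<close>

type_synonym 'v mon = "'v \<Rightarrow>\<^sub>0 nat"
type_synonym ('v, 'k) mpoly = "'v mon \<Rightarrow>\<^sub>0 'k"

definition alg_closed_field :: "'k::field itself \<Rightarrow> bool" where
  "alg_closed_field _ \<longleftrightarrow> (\<forall>p :: 'k poly. degree p > 0 \<longrightarrow> (\<exists>x. poly p x = 0))"

definition mdeg :: "'v mon \<Rightarrow> nat" where
  "mdeg \<alpha> = (\<Sum>v\<in>Poly_Mapping.keys \<alpha>. Poly_Mapping.lookup \<alpha> v)"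

definition tdeg :: "('v, 'k::zero) mpoly \<Rightarrow> nat" where
  "tdeg p = Max (insert 0 (mdeg ` Poly_Mapping.keys p))"

definition mconst :: "'k::zero \<Rightarrow> ('v, 'k) mpoly" where
  "mconst c = Poly_Mapping.single 0 c"

definition mmono :: "'v mon \<Rightarrow> ('v, 'k::{zero,one}) mpoly" where
  "mmono \<alpha> = Poly_Mapping.single \<alpha> 1"

definition MonLe :: "nat \<Rightarrow> 'v mon set" where
  "MonLe \<Delta> = {\<alpha>. mdeg \<alpha> \<le> \<Delta>}"

definition ideal_gen :: "('v, 'k::field) mpoly list \<Rightarrow> ('v, 'k) mpoly set" where
  "ideal_gen fs = {p. \<exists>q. p = (\<Sum>i<length fs. q i * fs ! i)}"

definition ideal_deg :: "('v, 'k::field) mpoly list \<Rightarrow> nat \<Rightarrow> ('v, 'k) mpoly set" where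
  "ideal_deg fs d = {p. \<exists>q. (\<forall>i<length fs. q i = 0 \<or> tdeg (q i) + tdeg (fs ! i) \<le> d)
       \<and> p = (\<Sum>i<length fs. q i * fs ! i)}"

definition quot_basis :: "('v, 'k::field) mpoly list \<Rightarrow> ('v, 'k) mpoly list \<Rightarrow> bool" where
  "quot_basis fs bs \<longleftrightarrow>
     (\<forall>c. (\<Sum>i<length bs. mconst (c i) * bs ! i) \<in> ideal_gen fs \<longrightarrow> (\<forall>i<length bs. c i = 0))
   \<and> (\<forall>p. \<exists>c. p - (\<Sum>i<length bs. mconst (c i) * bs ! i) \<in> ideal_gen fs)"

definition quot_coord :: "('v, 'k::field) mpoly list \<Rightarrow> ('v, 'k) mpoly list \<Rightarrow> ('v, 'k) mpoly \<Rightarrow> nat \<Rightarrow> 'k" where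
  "quot_coord fs bs p = (THE c. (\<forall>i. length bs \<le> i \<longrightarrow> c i = 0)
       \<and> p - (\<Sum>i<length bs. mconst (c i) * bs ! i) \<in> ideal_gen fs)"

definition mult_trace :: "('v, 'k::field) mpoly list \<Rightarrow> ('v, 'k) mpoly \<Rightarrow> 'k" where
  "mult_trace fs h = (let bs = (SOME bs. quot_basis fs bs) in
      (\<Sum>k<length bs. quot_coord fs bs (h * bs ! k) k))"

end

theory Submission
  imports Defs
begin

(* Write b_i for the monomial B_i,
   A = K[x]/I, V for the row space of Mac_Delta(f) and <w, p> = sum_alpha p_alpha w_alpha for
   the pairing of a vector w indexed by Mon_le(Delta) with a polynomial p of degree <= Delta.
   1. If w is orthogonal to V then, since B spans K[x]_Delta modulo V and V lies in I,
      <w, p> only depends on the class of p in A: <w, p> = Lambda_w(p), where Lambda_w is the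
      functional on A taking the values w(b_k) on the basis B.
   2. For w = y the moment matrix is the Gram matrix of Lambda_y, and column j of the stacked
      matrix [M_B(y); R_B(y)] is orthogonal to V with values Lambda_y(b_j b_k) on B; hence
      its pairing with b_i J equals Lambda_y(b_j b_i J).
   3. Inverting the Gram matrix gives the dual basis b_l^*, and for any functional with a dual
      basis, Lambda(J g) = Tr(g) when J = sum_l b_l b_l^* (trace formula). *)

lemma ideal_zero: "0 \<in> ideal_gen fs"
  unfolding ideal_gen_def by (rule CollectI, rule exI[of _ "\<lambda>_. 0"]) simp

lemma ideal_add: "p \<in> ideal_gen fs \<Longrightarrow> q \<in> ideal_gen fs \<Longrightarrow> p + q \<in> ideal_gen fs"
proof -
  assume "p \<in> ideal_gen fs" "q \<in> ideal_gen fs"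
  then obtain a b where "p = (\<Sum>i<length fs. a i * fs ! i)" "q = (\<Sum>i<length fs. b i * fs ! i)"
    unfolding ideal_gen_def by blast
  thus ?thesis unfolding ideal_gen_def
    by (auto intro!: exI[of _ "\<lambda>i. a i + b i"] simp: sum.distrib distrib_right)
qed

lemma ideal_mult: "p \<in> ideal_gen fs \<Longrightarrow> r * p \<in> ideal_gen fs"
proof -
  assume "p \<in> ideal_gen fs"
  then obtain a where "p = (\<Sum>i<length fs. a i * fs ! i)"
    unfolding ideal_gen_def by blast
  thus ?thesis unfolding ideal_gen_def
    by (auto intro!: exI[of _ "\<lambda>i. r * a i"] simp: sum_distrib_left mult.assoc)
qed

lemma ideal_uminus: "p \<in> ideal_gen fs \<Longrightarrow> - p \<in> ideal_gen fs"
  using ideal_mult[of p fs "-1"] by simp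

lemma ideal_diff: "p \<in> ideal_gen fs \<Longrightarrow> q \<in> ideal_gen fs \<Longrightarrow> p - q \<in> ideal_gen fs"
  using ideal_add[OF _ ideal_uminus] by (metis diff_conv_add_uminus)

lemma ideal_sum: "(\<And>k. k \<in> K \<Longrightarrow> p k \<in> ideal_gen fs) \<Longrightarrow> sum p K \<in> ideal_gen fs"
  by (induction K rule: infinite_finite_induct) (auto intro: ideal_zero ideal_add)

lemma mconst_add: "mconst (a + b) = mconst a + mconst b"
  unfolding mconst_def by (simp add: single_add)

lemma mconst_mult: "mconst (a * b) = (mconst a * mconst b :: ('v,'k::comm_semiring_1) mpoly)"
  unfolding mconst_def by (simp add: mult_single)

lemma mconst_0 [simp]: "mconst 0 = 0"
  unfolding mconst_def by simp

lemma mconst_1 [simp]: "mconst 1 = 1"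
  unfolding mconst_def by simp

lemma mconst_diff: "mconst (a - b) = (mconst a - mconst b :: ('v,'k::ab_group_add) mpoly)"
  unfolding mconst_def by (simp add: single_diff)

lemma mconst_sum: "mconst (sum f K) = sum (\<lambda>k. mconst (f k)) K"
  by (induction K rule: infinite_finite_induct) (auto simp: mconst_add)

lemma lookup_mconst_mult:
  "Poly_Mapping.lookup (mconst c * p) a = (c::'k::field) * Poly_Mapping.lookup p a"
  unfolding mconst_def mult_map_scale_conv_mult[symmetric]
  by (simp add: map.rep_eq when_def)

lemma mmono_mult: "mmono a * mmono b = (mmono (a + b) :: ('v,'k::comm_semiring_1) mpoly)"
  unfolding mmono_def by (simp add: mult_single)

lemma lookup_mmono: "Poly_Mapping.lookup (mmono a) b = (if a = b then 1 else 0)"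
  unfolding mmono_def by (simp add: lookup_single)

(* Degrees.  Over finitely many variables the degree of a monomial is the sum of all its
   exponents; hence it is additive and there are only finitely many monomials of bounded
   degree. *)

lemma mdeg_UNIV: "mdeg (a :: ('v::finite) mon) = (\<Sum>v\<in>UNIV. Poly_Mapping.lookup a v)"
  unfolding mdeg_def by (rule sum.mono_neutral_left) (auto simp: in_keys_iff)

lemma mdeg_add: "mdeg (a + b :: ('v::finite) mon) = mdeg a + mdeg b"
  by (simp add: mdeg_UNIV lookup_add sum.distrib)

lemma lookup_le_mdeg: "Poly_Mapping.lookup a v \<le> mdeg (a :: ('v::finite) mon)"
  unfolding mdeg_UNIV by (rule member_le_sum) auto

lemma finite_MonLe: "finite (MonLe d :: ('v::finite) mon set)"
proof -
  let ?F = "{f. \<forall>x. (x \<in> UNIV \<longrightarrow> f x \<in> {..d}) \<and> (x \<notin> UNIV \<longrightarrow> f x = (0::nat))}"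
  have "Poly_Mapping.lookup ` (MonLe d :: 'v mon set) \<subseteq> ?F"
    using lookup_le_mdeg by (fastforce simp: MonLe_def intro: order_trans)
  hence "finite (Poly_Mapping.lookup ` (MonLe d :: 'v mon set))"
    by (rule finite_subset) (use finite_set_of_finite_funs[of "UNIV::'v set" "{..d}" 0] in simp)
  moreover have "inj_on Poly_Mapping.lookup (MonLe d :: 'v mon set)"
    by (rule inj_onI) (rule poly_mapping_eqI, simp)
  ultimately show ?thesis by (rule finite_imageD)
qed

lemma tdeg_le: "tdeg p \<le> d \<longleftrightarrow> (\<forall>a. Poly_Mapping.lookup p a \<noteq> 0 \<longrightarrow> mdeg a \<le> d)"
  unfolding tdeg_def by (auto simp: in_keys_iff)

lemma tdeg_mmono: "tdeg (mmono a :: ('v, 'k::field) mpoly) = mdeg a"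
  unfolding tdeg_def mmono_def by simp

lemma tdeg_mult_le: "tdeg (p * q :: ('v::finite, 'k::field) mpoly) \<le> tdeg p + tdeg q"
  unfolding tdeg_le
proof (intro allI impI)
  fix a assume "Poly_Mapping.lookup (p * q) a \<noteq> 0"
  hence "a \<in> Poly_Mapping.keys (p * q)" by (simp add: in_keys_iff)
  then obtain b c where a: "a = b + c" and "b \<in> Poly_Mapping.keys p" "c \<in> Poly_Mapping.keys q"
    using keys_mult by blast
  hence "mdeg b \<le> tdeg p" "mdeg c \<le> tdeg q"
    using tdeg_le[of p "tdeg p"] tdeg_le[of q "tdeg q"] by (auto simp: in_keys_iff)
  thus "mdeg a \<le> tdeg p + tdeg q" by (simp add: a mdeg_add)
qed

lemma tdeg_lin_comb_mmono:
  assumes "\<forall>k\<in>K. mdeg (\<alpha> k) \<le> d"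
  shows "tdeg (\<Sum>k\<in>K. mconst (c k) * mmono (\<alpha> k) :: ('v, 'k::field) mpoly) \<le> d"
  unfolding tdeg_le
proof (intro allI impI)
  fix a assume "Poly_Mapping.lookup (\<Sum>k\<in>K. mconst (c k) * mmono (\<alpha> k)) a \<noteq> 0"
  hence "\<exists>k\<in>K. \<alpha> k = a"
    by (auto simp: lookup_sum lookup_mconst_mult lookup_mmono intro: ccontr)
  thus "mdeg a \<le> d" using assms by blast
qed

lemma sum_mconst_diff:
  "(\<Sum>i<n. mconst (a i) * bs ! i) - (\<Sum>i<n. mconst (b i) * bs ! i)
   = (\<Sum>i<n. mconst (a i - b i) * (bs ! i :: ('v,'k::field) mpoly))"
  by (simp add: sum_subtractf[symmetric] mconst_diff left_diff_distrib)

lemma coord_uniq: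
  assumes qb: "quot_basis fs bs"
    and h1: "p - (\<Sum>i<length bs. mconst (c1 i) * bs ! i) \<in> ideal_gen fs"
    and h2: "p - (\<Sum>i<length bs. mconst (c2 i) * bs ! i) \<in> ideal_gen fs"
    and i: "i < length bs"
  shows "c1 i = c2 i"
proof -
  have "(p - (\<Sum>i<length bs. mconst (c2 i) * bs ! i)) - (p - (\<Sum>i<length bs. mconst (c1 i) * bs ! i))
     \<in> ideal_gen fs" using h1 h2 by (rule ideal_diff[rotated])
  hence diff_in: "(\<Sum>i<length bs. mconst (c1 i - c2 i) * bs ! i) \<in> ideal_gen fs"
    by (simp add: sum_mconst_diff[symmetric])
  from qb have "\<forall>c. (\<Sum>i<length bs. mconst (c i) * bs ! i) \<in> ideal_gen fs
      \<longrightarrow> (\<forall>i<length bs. c i = 0)"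
    unfolding quot_basis_def by blast
  from this[rule_format, of "\<lambda>i. c1 i - c2 i"] diff_in i have "c1 i - c2 i = 0" by blast
  thus ?thesis by simp
qed

lemma coord_spec:
  assumes qb: "quot_basis fs bs"
  shows "(\<forall>i. length bs \<le> i \<longrightarrow> quot_coord fs bs p i = 0)
    \<and> p - (\<Sum>i<length bs. mconst (quot_coord fs bs p i) * bs ! i) \<in> ideal_gen fs"
proof -
  obtain c where c: "p - (\<Sum>i<length bs. mconst (c i) * bs ! i) \<in> ideal_gen fs"
    using qb unfolding quot_basis_def by blast
  let ?c = "\<lambda>i. if i < length bs then c i else 0"
  have "(\<Sum>i<length bs. mconst (?c i) * bs ! i) = (\<Sum>i<length bs. mconst (c i) * bs ! i)"
    by (rule sum.cong) auto
  with c have c': "p - (\<Sum>i<length bs. mconst (?c i) * bs ! i) \<in> ideal_gen fs" by simp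
  have "\<exists>!c. (\<forall>i. length bs \<le> i \<longrightarrow> c i = 0)
       \<and> p - (\<Sum>i<length bs. mconst (c i) * bs ! i) \<in> ideal_gen fs"
  proof (rule ex1I[of _ ?c])
    fix d assume d: "(\<forall>i. length bs \<le> i \<longrightarrow> d i = 0)
       \<and> p - (\<Sum>i<length bs. mconst (d i) * bs ! i) \<in> ideal_gen fs"
    show "d = ?c"
    proof
      fix i show "d i = ?c i"
        using d coord_uniq[OF qb _ c', of d i] by (cases "i < length bs") auto
    qed
  qed (use c' in auto)
  thus ?thesis unfolding quot_coord_def by (rule theI')
qed

lemma coord_rep:
  "quot_basis fs bs \<Longrightarrow>
     p - (\<Sum>i<length bs. mconst (quot_coord fs bs p i) * bs ! i) \<in> ideal_gen fs"
  using coord_spec by blast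

lemma coord_char:
  assumes qb: "quot_basis fs bs"
    and h: "p - (\<Sum>i<length bs. mconst (c i) * bs ! i) \<in> ideal_gen fs"
    and i: "i < length bs"
  shows "quot_coord fs bs p i = c i"
  using coord_uniq[OF qb coord_rep[OF qb] h i] .

lemma coord_cong:
  assumes qb: "quot_basis fs bs" and h: "p - q \<in> ideal_gen fs" and i: "i < length bs"
  shows "quot_coord fs bs p i = quot_coord fs bs q i"
proof (rule coord_char[OF qb _ i])
  have "(p - q) + (q - (\<Sum>i<length bs. mconst (quot_coord fs bs q i) * bs ! i)) \<in> ideal_gen fs"
    using h coord_rep[OF qb] by (rule ideal_add)
  thus "p - (\<Sum>i<length bs. mconst (quot_coord fs bs q i) * bs ! i) \<in> ideal_gen fs" by simp
qed

lemma coord_lin: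
  assumes qb: "quot_basis fs bs" and i: "i < length bs"
  shows "quot_coord fs bs (\<Sum>k\<in>K. mconst (a k) * p k) i = (\<Sum>k\<in>K. a k * quot_coord fs bs (p k) i)"
proof (rule coord_char[OF qb _ i])
  let ?n = "length bs"
  let ?q = "\<lambda>k. p k - (\<Sum>i<?n. mconst (quot_coord fs bs (p k) i) * bs ! i)"
  have "(\<Sum>k\<in>K. mconst (a k) * ?q k) \<in> ideal_gen fs"
    by (rule ideal_sum, rule ideal_mult, rule coord_rep[OF qb])
  moreover have "(\<Sum>k\<in>K. mconst (a k) * ?q k) = (\<Sum>k\<in>K. mconst (a k) * p k)
     - (\<Sum>i<?n. mconst (\<Sum>k\<in>K. a k * quot_coord fs bs (p k) i) * bs ! i)"
    by (simp add: right_diff_distrib sum_subtractf sum_distrib_left mconst_sum mconst_mult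
        sum_distrib_right mult.assoc sum.swap[of _ K])
  ultimately show "(\<Sum>k\<in>K. mconst (a k) * p k)
     - (\<Sum>i<?n. mconst (\<Sum>k\<in>K. a k * quot_coord fs bs (p k) i) * bs ! i) \<in> ideal_gen fs"
    by simp
qed

(* The trace of multiplication by h may be computed in any basis of A; in particular
   mult_trace, which uses an unspecified basis, can be evaluated in ours. *)
lemma trace_indep:
  assumes qb: "quot_basis fs bs" and qb': "quot_basis fs bs'"
  shows "(\<Sum>k<length bs'. quot_coord fs bs' (h * bs' ! k) k)
       = (\<Sum>l<length bs. quot_coord fs bs (h * bs ! l) l)"
proof -
  let ?c = "quot_coord fs bs" and ?c' = "quot_coord fs bs'"
  have coord_change: "?c' (h * bs' ! k) k = (\<Sum>l<length bs. ?c (bs' ! k) l * ?c' (h * bs ! l) k)"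
    if k: "k < length bs'" for k
  proof -
    have "h * bs' ! k - (\<Sum>l<length bs. mconst (?c (bs' ! k) l) * (h * bs ! l)) \<in> ideal_gen fs"
      using ideal_mult[OF coord_rep[OF qb, of "bs' ! k"], of h]
      by (simp add: right_diff_distrib sum_distrib_left mult.left_commute)
    hence "?c' (h * bs' ! k) k = ?c' (\<Sum>l<length bs. mconst (?c (bs' ! k) l) * (h * bs ! l)) k"
      by (rule coord_cong[OF qb' _ k])
    thus ?thesis by (simp add: coord_lin[OF qb' k])
  qed
  have coord_back: "(\<Sum>k<length bs'. ?c' (h * bs ! l) k * ?c (bs' ! k) l) = ?c (h * bs ! l) l"
    if l: "l < length bs" for l
  proof -
    have "(\<Sum>k<length bs'. mconst (?c' (h * bs ! l) k) * bs' ! k) - h * bs ! l \<in> ideal_gen fs"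
      using ideal_uminus[OF coord_rep[OF qb', of "h * bs ! l"]] by simp
    hence "?c (\<Sum>k<length bs'. mconst (?c' (h * bs ! l) k) * bs' ! k) l = ?c (h * bs ! l) l"
      by (rule coord_cong[OF qb _ l])
    thus ?thesis by (simp add: coord_lin[OF qb l])
  qed
  have "(\<Sum>k<length bs'. ?c' (h * bs' ! k) k)
     = (\<Sum>l<length bs. \<Sum>k<length bs'. ?c' (h * bs ! l) k * ?c (bs' ! k) l)"
    by (simp add: coord_change sum.swap[of _ "{..<length bs'}"] mult.commute)
  also have "\<dots> = (\<Sum>l<length bs. ?c (h * bs ! l) l)" by (simp add: coord_back)
  finally show ?thesis .
qed

lemma mult_trace_in_basis:
  assumes qb: "quot_basis fs bs"
  shows "mult_trace fs h = (\<Sum>l<length bs. quot_coord fs bs (h * bs ! l) l)"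
proof -
  have "quot_basis fs (SOME bs. quot_basis fs bs)" using qb by (rule someI)
  thus ?thesis unfolding mult_trace_def Let_def by (rule trace_indep[OF qb])
qed

(* The pairing of a vector w indexed by Mon_le(Delta) with a polynomial: for a row r of
   Mac_Delta(f) this is the entry (Mac_Delta(f) w)_r, and for the row of b_i J in Syl_B(J)
   it is the entry (Syl_B(J) w)_i. *)
definition pairing :: "nat \<Rightarrow> ('v mon \<Rightarrow> 'k) \<Rightarrow> ('v, 'k::field) mpoly \<Rightarrow> 'k" where
  "pairing \<Delta> w p = (\<Sum>\<alpha>\<in>MonLe \<Delta>. Poly_Mapping.lookup p \<alpha> * w \<alpha>)"

lemma pairing_lin:
  "pairing \<Delta> w (\<Sum>k\<in>K. mconst (a k) * q k) = (\<Sum>k\<in>K. a k * pairing \<Delta> w (q k))"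
  unfolding pairing_def
  by (simp add: lookup_sum lookup_mconst_mult sum_distrib_right sum_distrib_left
      mult.assoc sum.swap[of _ K])

lemma pairing_diff: "pairing \<Delta> w (p - q) = pairing \<Delta> w p - pairing \<Delta> w q"
  unfolding pairing_def by (simp add: lookup_minus left_diff_distrib sum_subtractf)

lemma pairing_mmono:
  assumes "\<alpha> \<in> MonLe \<Delta>"
  shows "pairing \<Delta> w (mmono \<alpha> :: ('v::finite, 'k::field) mpoly) = w \<alpha>"
proof -
  have "pairing \<Delta> w (mmono \<alpha>) = (\<Sum>\<beta>\<in>MonLe \<Delta>. if \<alpha> = \<beta> then w \<beta> else 0)"
    unfolding pairing_def lookup_mmono by (rule sum.cong) auto
  thus ?thesis using assms by (simp add: sum.delta' finite_MonLe)
qed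

lemma pairing_orth_span:
  assumes orth: "\<forall>r\<in>set rows. pairing \<Delta> w r = 0"
    and span: "\<forall>p\<in>V. \<exists>a. p = (\<Sum>i<length rows. mconst (a i) * rows ! i)"
  shows "\<forall>p\<in>V. pairing \<Delta> w p = 0"
proof
  fix p assume "p \<in> V"
  then obtain a where "p = (\<Sum>i<length rows. mconst (a i) * rows ! i)" using span by blast
  thus "pairing \<Delta> w p = 0" using orth by (simp add: pairing_lin)
qed

definition quot_functional ::
    "('v, 'k::field) mpoly list \<Rightarrow> ('v, 'k) mpoly list \<Rightarrow> (nat \<Rightarrow> 'k) \<Rightarrow> ('v, 'k) mpoly \<Rightarrow> 'k" where
  "quot_functional fs bs v p = (\<Sum>l<length bs. quot_coord fs bs p l * v l)"

lemma quot_functional_cong: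
  assumes "quot_basis fs bs" and "p - q \<in> ideal_gen fs"
  shows "quot_functional fs bs v p = quot_functional fs bs v q"
  unfolding quot_functional_def using coord_cong[OF assms] by simp

lemma quot_functional_lin:
  assumes qb: "quot_basis fs bs" and K: "finite K"
  shows "quot_functional fs bs v (\<Sum>k\<in>K. mconst (a k) * p k)
       = (\<Sum>k\<in>K. a k * quot_functional fs bs v (p k))"
  unfolding quot_functional_def
  by (simp add: coord_lin[OF qb] sum_distrib_right sum_distrib_left mult.assoc
      sum.swap[of _ K])

lemma quot_functional_expand:
  assumes qb: "quot_basis fs bs"
  shows "quot_functional fs bs (\<lambda>k. quot_functional fs bs v (r * bs ! k)) q
       = quot_functional fs bs v (r * q)"
proof -
  let ?c = "quot_coord fs bs q"
  have "r * (q - (\<Sum>k<length bs. mconst (?c k) * bs ! k)) \<in> ideal_gen fs"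
    using coord_rep[OF qb, of q] by (rule ideal_mult)
  hence "r * q - (\<Sum>k<length bs. mconst (?c k) * (r * bs ! k)) \<in> ideal_gen fs"
    by (simp add: right_diff_distrib sum_distrib_left mult.left_commute)
  hence "quot_functional fs bs v (r * q)
      = quot_functional fs bs v (\<Sum>k<length bs. mconst (?c k) * (r * bs ! k))"
    by (rule quot_functional_cong[OF qb])
  thus ?thesis
    by (simp add: quot_functional_lin[OF qb] quot_functional_def[of fs bs _ q])
qed

lemma quot_functional_values_cong:
  "(\<And>k. k < length bs \<Longrightarrow> v k = v' k) \<Longrightarrow> quot_functional fs bs v p = quot_functional fs bs v' p"
  unfolding quot_functional_def by simp

lemma dual_basis_from_inverse_gram:
  assumes qb: "quot_basis fs bs"
    and gram: "\<forall>k<length bs. \<forall>m<length bs. quot_functional fs bs v (bs ! m * bs ! k) = G k m"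
    and inv: "\<forall>k<length bs. \<forall>l<length bs. (\<Sum>m<length bs. G k m * Minv m l) = (if k = l then 1 else 0)"
  shows "\<forall>k<length bs. \<forall>l<length bs.
           quot_functional fs bs v ((\<Sum>m<length bs. mconst (Minv m l) * bs ! m) * bs ! k)
           = (if k = l then 1 else 0)"
proof (intro allI impI)
  fix k l assume k: "k < length bs" and l: "l < length bs"
  have "quot_functional fs bs v ((\<Sum>m<length bs. mconst (Minv m l) * bs ! m) * bs ! k)
      = (\<Sum>m<length bs. Minv m l * quot_functional fs bs v (bs ! m * bs ! k))"
    by (simp add: sum_distrib_right mult.assoc quot_functional_lin[OF qb])
  also have "\<dots> = (\<Sum>m<length bs. G k m * Minv m l)"
    by (rule sum.cong[OF refl]) (simp add: gram[rule_format, OF k] mult.commute)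
  also have "\<dots> = (if k = l then 1 else 0)" using inv k l by blast
  finally show "quot_functional fs bs v ((\<Sum>m<length bs. mconst (Minv m l) * bs ! m) * bs ! k)
      = (if k = l then 1 else 0)" .
qed

lemma trace_formula:
  assumes qb: "quot_basis fs bs"
    and dual: "\<forall>k<length bs. \<forall>l<length bs.
                 quot_functional fs bs v (dual l * bs ! k) = (if k = l then 1 else 0)"
    and J: "J - (\<Sum>l<length bs. bs ! l * dual l) \<in> ideal_gen fs"
  shows "quot_functional fs bs v (J * g) = mult_trace fs g"
proof -
  let ?\<Lambda> = "quot_functional fs bs v"
  have diag: "?\<Lambda> (dual l * (g * bs ! l)) = quot_coord fs bs (g * bs ! l) l"
    if l: "l < length bs" for l
  proof -
    have "?\<Lambda> (dual l * (g * bs ! l))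
        = (\<Sum>k<length bs. quot_coord fs bs (g * bs ! l) k * (if k = l then 1 else 0))"
      using quot_functional_expand[OF qb, of v "dual l" "g * bs ! l"] dual l
      by (simp add: quot_functional_def[of fs bs "\<lambda>k. ?\<Lambda> (dual l * bs ! k)"])
    also have "\<dots> = quot_coord fs bs (g * bs ! l) l" using l by (simp add: if_distrib cong: if_cong)
    finally show ?thesis .
  qed
  have "(J - (\<Sum>l<length bs. bs ! l * dual l)) * g \<in> ideal_gen fs"
    by (subst mult.commute) (rule ideal_mult[OF J])
  hence "J * g - (\<Sum>l<length bs. bs ! l * dual l) * g \<in> ideal_gen fs"
    by (simp only: left_diff_distrib)
  hence "?\<Lambda> (J * g) = ?\<Lambda> ((\<Sum>l<length bs. bs ! l * dual l) * g)"
    by (rule quot_functional_cong[OF qb])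
  also have "\<dots> = ?\<Lambda> (\<Sum>l<length bs. mconst 1 * (dual l * (g * bs ! l)))"
    by (simp add: sum_distrib_left sum_distrib_right ac_simps)
  also have "\<dots> = (\<Sum>l<length bs. quot_coord fs bs (g * bs ! l) l)"
    by (simp only: quot_functional_lin[OF qb finite_lessThan]) (simp add: diag)
  also have "\<dots> = mult_trace fs g" by (rule mult_trace_in_basis[OF qb, symmetric])
  finally show ?thesis .
qed

(* The setting of the theorem: the monomials B, of degree <= D, form a basis of A and span
   the polynomials of degree <= Delta modulo a space V of elements of I (the row space of
   Mac_Delta(f)), where 2 D <= Delta, so that all products b_i b_j still have degree <= Delta. *)
locale truncated_basis =
  fixes fs :: "('v::finite, 'k::field) mpoly list"
    and B :: "'v mon list"
    and D \<Delta> :: nat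
    and V :: "('v, 'k) mpoly set"
  assumes B_basis: "quot_basis fs (map mmono B)"
    and B_deg: "\<forall>i<length B. mdeg (B ! i) \<le> D"
    and Delta_ge: "2 * D \<le> \<Delta>"
    and V_ideal: "V \<subseteq> ideal_gen fs"
    and B_trunc_span:
      "\<forall>p. tdeg p \<le> \<Delta> \<longrightarrow> (\<exists>c. p - (\<Sum>i<length B. mconst (c i) * mmono (B ! i)) \<in> V)"
begin

definition moment_functional :: "('v mon \<Rightarrow> 'k) \<Rightarrow> ('v, 'k) mpoly \<Rightarrow> 'k" where
  "moment_functional w = quot_functional fs (map mmono B) (\<lambda>k. w (B ! k))"

lemma B_low: "set B \<subseteq> MonLe \<Delta>"
  using B_deg Delta_ge by (force simp: MonLe_def in_set_conv_nth)

lemma B_sum_low: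
  assumes "k < length B" "m < length B"
  shows "B ! k + B ! m \<in> MonLe \<Delta>"
proof -
  have "mdeg (B ! k) \<le> D" "mdeg (B ! m) \<le> D" using B_deg assms by auto
  thus ?thesis using Delta_ge by (simp add: MonLe_def mdeg_add)
qed

lemma tdeg_basis_mult:
  fixes p :: "('v, 'k) mpoly"
  assumes "tdeg p \<le> D" and "k < length B"
  shows "tdeg (mmono (B ! k) * p) \<le> \<Delta>"
proof -
  have "mdeg (B ! k) \<le> D" using B_deg assms(2) by auto
  thus ?thesis using tdeg_mult_le[of "mmono (B ! k)" p] assms(1) Delta_ge
    by (simp add: tdeg_mmono)
qed

lemma pairing_eq_moment_functional:
  assumes orth: "\<forall>q\<in>V. pairing \<Delta> w q = 0" and deg: "tdeg p \<le> \<Delta>"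
  shows "pairing \<Delta> w p = moment_functional w p"
proof -
  obtain c where c: "p - (\<Sum>k<length B. mconst (c k) * mmono (B ! k)) \<in> V"
    using B_trunc_span deg by blast
  have coords: "quot_coord fs (map mmono B) p k = c k" if "k < length B" for k
    using coord_char[OF B_basis, of p c k] c V_ideal that by auto
  have "pairing \<Delta> w (p - (\<Sum>k<length B. mconst (c k) * mmono (B ! k))) = 0"
    using orth c by blast
  hence "pairing \<Delta> w p = (\<Sum>k<length B. c k * pairing \<Delta> w (mmono (B ! k)))"
    by (simp add: pairing_diff pairing_lin)
  also have "\<dots> = (\<Sum>k<length B. c k * w (B ! k))"
    using B_low by (simp add: pairing_mmono subset_iff)
  also have "\<dots> = moment_functional w p"
    by (simp add: moment_functional_def quot_functional_def coords)
  finally show ?thesis .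
qed

lemma moment_functional_gram:
  assumes orth: "\<forall>q\<in>V. pairing \<Delta> w q = 0" and k: "k < length B" and m: "m < length B"
  shows "moment_functional w (mmono (B ! m) * mmono (B ! k)) = w (B ! k + B ! m)"
proof -
  have "tdeg (mmono (B ! m) * mmono (B ! k) :: ('v, 'k) mpoly) \<le> \<Delta>"
    by (rule tdeg_basis_mult) (use B_deg k m in \<open>simp_all add: tdeg_mmono\<close>)
  hence "moment_functional w (mmono (B ! m) * mmono (B ! k))
      = pairing \<Delta> w (mmono (B ! m) * mmono (B ! k))"
    by (rule pairing_eq_moment_functional[OF orth, symmetric])
  also have "\<dots> = w (B ! k + B ! m)"
    using B_sum_low[OF k m] by (simp add: mmono_mult add.commute pairing_mmono)
  finally show ?thesis .
qed

lemma column_pairing: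
  assumes orth_w: "\<forall>q\<in>V. pairing \<Delta> w q = 0" and orth_c: "\<forall>q\<in>V. pairing \<Delta> c q = 0"
    and col: "\<forall>k<length B. c (B ! k) = w (B ! k + B ! j)"
    and i: "i < length B" and j: "j < length B" and deg: "tdeg p \<le> D"
  shows "pairing \<Delta> c (mmono (B ! i) * p) = moment_functional w (mmono (B ! j) * (mmono (B ! i) * p))"
proof -
  let ?bs = "map mmono B"
  have "pairing \<Delta> c (mmono (B ! i) * p) = moment_functional c (mmono (B ! i) * p)"
    by (rule pairing_eq_moment_functional[OF orth_c tdeg_basis_mult[OF deg i]])
  also have "\<dots> = quot_functional fs ?bs (\<lambda>k. moment_functional w (?bs ! j * ?bs ! k))
                    (mmono (B ! i) * p)"
    unfolding moment_functional_def[of c]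
    by (rule quot_functional_values_cong) (simp add: col j moment_functional_gram[OF orth_w])
  also have "\<dots> = moment_functional w (?bs ! j * (mmono (B ! i) * p))"
    unfolding moment_functional_def by (rule quot_functional_expand[OF B_basis])
  finally show ?thesis using j by simp
qed

lemma moment_functional_trace:
  assumes orth: "\<forall>q\<in>V. pairing \<Delta> w q = 0"
    and Minv_right: "\<forall>k<length B. \<forall>l<length B.
                       (\<Sum>m<length B. w (B ! k + B ! m) * Minv m l) = (if k = l then 1 else 0)"
    and J_cong: "J - (\<Sum>l<length B. mmono (B ! l) * (\<Sum>m<length B. mconst (Minv m l) * mmono (B ! m)))
                   \<in> ideal_gen fs"
  shows "moment_functional w (J * g) = mult_trace fs g"
proof -
  let ?bs = "map mmono B"
  have gram: "\<forall>k<length ?bs. \<forall>m<length ?bs.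
      quot_functional fs ?bs (\<lambda>k. w (B ! k)) (?bs ! m * ?bs ! k) = w (B ! k + B ! m)"
    using moment_functional_gram[OF orth] by (simp add: moment_functional_def)
  have inv: "\<forall>k<length ?bs. \<forall>l<length ?bs.
      (\<Sum>m<length ?bs. w (B ! k + B ! m) * Minv m l) = (if k = l then 1 else 0)"
    using Minv_right by simp
  note dual = dual_basis_from_inverse_gram[OF B_basis gram inv]
  have "(\<Sum>l<length ?bs. ?bs ! l * (\<Sum>m<length ?bs. mconst (Minv m l) * ?bs ! m))
      = (\<Sum>l<length B. mmono (B ! l) * (\<Sum>m<length B. mconst (Minv m l) * mmono (B ! m)))"
    by (simp only: length_map) (intro sum.cong refl arg_cong2[where f = "(*)"]; simp)
  hence "J - (\<Sum>l<length ?bs. ?bs ! l * (\<Sum>m<length ?bs. mconst (Minv m l) * ?bs ! m))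
      \<in> ideal_gen fs" using J_cong by simp
  thus ?thesis unfolding moment_functional_def by (rule trace_formula[OF B_basis dual])
qed

end

theorem theorem3p3:
  fixes fs :: "('v::finite, 'k::field) mpoly list"
    and B :: "'v mon list"
    and D \<Delta> :: nat
    and rows :: "('v, 'k) mpoly list"
    and y :: "'v mon \<Rightarrow> 'k"
    and Minv :: "nat \<Rightarrow> nat \<Rightarrow> 'k"
    and R :: "'v mon \<Rightarrow> nat \<Rightarrow> 'k"
    and J :: "('v, 'k) mpoly"
  defines "N \<equiv> length B"
    and "V \<equiv> ideal_deg fs (\<Delta> + 1) \<inter> {p. tdeg p \<le> \<Delta>}"
  assumes alg_closed: "alg_closed_field TYPE('k)"
    and B_basis: "quot_basis fs (map mmono B)"
    and B_deg: "\<forall>i<N. mdeg (B ! i) \<le> D"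
    and Delta_ge: "2 * D \<le> \<Delta>"
    and B_trunc_indep: "\<forall>c. (\<Sum>i<N. mconst (c i) * mmono (B ! i)) \<in> V \<longrightarrow> (\<forall>i<N. c i = 0)"
    and B_trunc_span: "\<forall>p. tdeg p \<le> \<Delta> \<longrightarrow> (\<exists>c. p - (\<Sum>i<N. mconst (c i) * mmono (B ! i)) \<in> V)"
    and rows_in: "set rows \<subseteq> V"
    and rows_indep: "\<forall>a. (\<Sum>i<length rows. mconst (a i) * rows ! i) = 0 \<longrightarrow> (\<forall>i<length rows. a i = 0)"
    and rows_span: "\<forall>p\<in>V. \<exists>a. p = (\<Sum>i<length rows. mconst (a i) * rows ! i)"
    and Mac_y: "\<forall>r\<in>set rows. (\<Sum>\<alpha>\<in>MonLe \<Delta>. Poly_Mapping.lookup r \<alpha> * y \<alpha>) = 0"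
    and Minv_right: "\<forall>i<N. \<forall>j<N. (\<Sum>k<N. y (B ! i + B ! k) * Minv k j) = (if i = j then 1 else 0)"
    and Minv_left: "\<forall>i<N. \<forall>j<N. (\<Sum>k<N. Minv i k * y (B ! k + B ! j)) = (if i = j then 1 else 0)"
    and R_def: "\<forall>j<N. \<forall>r\<in>set rows. (\<Sum>\<alpha>\<in>MonLe \<Delta>. Poly_Mapping.lookup r \<alpha> *
                  (if \<alpha> \<in> set B then y (\<alpha> + B ! j) else R \<alpha> j)) = 0"
    and J_span: "\<exists>e. J = (\<Sum>i<N. mconst (e i) * mmono (B ! i))"
    and J_cong: "J - (\<Sum>i<N. mmono (B ! i) * (\<Sum>j<N. mconst (Minv j i) * mmono (B ! j))) \<in> ideal_gen fs"
  shows "\<forall>i<N. \<forall>j<N.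
           (\<Sum>\<alpha>\<in>MonLe \<Delta>. Poly_Mapping.lookup (mmono (B ! i) * J) \<alpha> *
               (if \<alpha> \<in> set B then y (\<alpha> + B ! j) else R \<alpha> j))
           = mult_trace fs (mmono (B ! i) * mmono (B ! j))"
proof (intro allI impI)
  fix i j assume i: "i < N" and j: "j < N"
  have "V \<subseteq> ideal_gen fs" unfolding V_def ideal_deg_def ideal_gen_def by blast
  then interpret truncated_basis fs B D \<Delta> V
    using B_basis B_deg Delta_ge B_trunc_span unfolding N_def by unfold_locales
  define col where "col \<alpha> = (if \<alpha> \<in> set B then y (\<alpha> + B ! j) else R \<alpha> j)" for \<alpha>
  have "\<forall>r\<in>set rows. pairing \<Delta> y r = 0" using Mac_y unfolding pairing_def .
  note y_orth = pairing_orth_span[OF this rows_span]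
  have "\<forall>r\<in>set rows. pairing \<Delta> col r = 0" using R_def j unfolding pairing_def col_def by blast
  note col_orth = pairing_orth_span[OF this rows_span]
  obtain e where J_eq: "J = (\<Sum>k<N. mconst (e k) * mmono (B ! k))" using J_span by blast
  have deg_J: "tdeg J \<le> D"
    unfolding J_eq by (rule tdeg_lin_comb_mmono) (use B_deg in \<open>simp add: N_def\<close>)
  have "pairing \<Delta> col (mmono (B ! i) * J) = moment_functional y (mmono (B ! j) * (mmono (B ! i) * J))"
    by (rule column_pairing[OF y_orth col_orth _ i[unfolded N_def] j[unfolded N_def] deg_J])
       (simp add: col_def)
  also have "\<dots> = moment_functional y (J * (mmono (B ! i) * mmono (B ! j)))"
    by (simp add: ac_simps)
  also have "\<dots> = mult_trace fs (mmono (B ! i) * mmono (B ! j))"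
    using moment_functional_trace[OF y_orth] Minv_right J_cong unfolding N_def by blast
  finally show "(\<Sum>\<alpha>\<in>MonLe \<Delta>. Poly_Mapping.lookup (mmono (B ! i) * J) \<alpha> *
      (if \<alpha> \<in> set B then y (\<alpha> + B ! j) else R \<alpha> j)) = mult_trace fs (mmono (B ! i) * mmono (B ! j))"
    unfolding pairing_def col_def .
qed

end
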